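(* Let $X=[0,1]^{\mathbb N_0}$ with shift $\sigma$, let $h\in C^2([0,1]^2;\mathbb R)$ satisfy $D_2D_1h<0$ on $[0,1]^2$, and $\varphi(\underline{x})=h(x_0,x_1)$. Then the Mañé set is \[N_\varphi=\{\underline{x}\in X: \sigma^i(\underline{x})\neq\sigma^j(\underline{x})\text{ whenever } i\neq j\}\ \cup\ \bigcup_{M\in\mathbb N_0}\sigma^{-M}\big(\{a^\infty: a\in\mathrm{m}_h\}\big).\]
   Context: $X=[0,1]^{\mathbb N_0}$ carries the metric $d_X(\underline{x},\underline{y})=\sum_{i\ge0}|x_i-y_i|/2^{i+1}$, and $\sigma(\underline{x})_i=x_{i+1}$. For Lipschitz $\varphi$, $\alpha_\varphi=\inf_\mu\int\varphi\,d\mu$ over $\sigma$-invariant Borel probability measures. $B(\underline{x},\underline{y},n;\varepsilon)=\{\underline{z}: d_X(\underline{x},\underline{z})<\varepsilon,\ d_X(\sigma^n\underline{z},\underline{y})<\varepsilon\}$, and the Mañé potential is $S_\varphi(\underline{x},\underline{y})=\lim_{\varepsilon\to0}\inf\{\sum_{i=0}^{n-1}(\varphi(\sigma^i\underline{z})-\alpha_\varphi): n\in\mathbb N,\ \underline{z}\in B(\underline{x},\underline{y},n;\varepsilon)\}$. A positive orbit $\{\sigma^n\underline{x}\}_{n\ge0}$ is $\varphi$-semi-static if $\sum_{n=i}^{j-1}(\varphi(\sigma^n\underline{x})-\alpha_\varphi)=S_\varphi(\sigma^i\underline{x},\sigma^j\underline{x})$ for all integers $0\le i<j$. The Mañé set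 is $N_\varphi=\{\sigma^k(\underline{x}): k\in\mathbb N_0,\ \{\sigma^n\underline{x}\}_{n\ge0}\text{ is }\varphi\text{-semi-static}\}$. $h^*=\min_x h(x,x)$, $\mathrm{m}_h=\{a:h(a,a)=h^*\}$, $a^\infty=aaa\ldots$. *)

theory Defs
  imports "HOL-Analysis.Analysis" "HOL-Probability.Probability"
begin

definition Xset :: "(nat \<Rightarrow> real) set" where
  "Xset = {x. \<forall>i. x i \<in> {0..1}}"

definition dX :: "(nat \<Rightarrow> real) \<Rightarrow> (nat \<Rightarrow> real) \<Rightarrow> real" where
  "dX x y = (\<Sum>i. \<bar>x i - y i\<bar> / 2 ^ (i + 1))"

definition shift :: "(nat \<Rightarrow> real) \<Rightarrow> (nat \<Rightarrow> real)" where
  "shift x = (\<lambda>i. x (Suc i))"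

text \<open>Shift-invariant Borel probability measures on X (Borel sets of the product
  topology, which is the topology of dX on X).\<close>
definition invariant_measure :: "(nat \<Rightarrow> real) measure \<Rightarrow> bool" where
  "invariant_measure \<mu> \<longleftrightarrow>
     sets \<mu> = sets (restrict_space borel Xset) \<and> prob_space \<mu> \<and>
     shift \<in> measurable \<mu> \<mu> \<and> distr \<mu> \<mu> shift = \<mu>"

definition alpha :: "((nat \<Rightarrow> real) \<Rightarrow> real) \<Rightarrow> real" where
  "alpha \<phi> = Inf {integral\<^sup>L \<mu> \<phi> | \<mu>. invariant_measure \<mu>}"

definition Bset :: "(nat \<Rightarrow> real) \<Rightarrow> (nat \<Rightarrow> real) \<Rightarrow> nat \<Rightarrow> real \<Rightarrow> (nat \<Rightarrow> real) set" where
  "Bset x y n \<epsilon> = {z \<in> Xset. dX x z < \<epsilon> \<and> dX ((shift ^^ n) z) y < \<epsilon>}"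

definition bsum :: "((nat \<Rightarrow> real) \<Rightarrow> real) \<Rightarrow> nat \<Rightarrow> (nat \<Rightarrow> real) \<Rightarrow> real" where
  "bsum \<phi> n z = (\<Sum>i<n. \<phi> ((shift ^^ i) z) - alpha \<phi>)"

definition mane_pot :: "((nat \<Rightarrow> real) \<Rightarrow> real) \<Rightarrow> (nat \<Rightarrow> real) \<Rightarrow> (nat \<Rightarrow> real) \<Rightarrow> ereal" where
  "mane_pot \<phi> x y = Lim (at_right (0::real))
     (\<lambda>\<epsilon>. INF p \<in> {(n, z). n \<ge> 1 \<and> z \<in> Bset x y n \<epsilon>}. ereal (bsum \<phi> (fst p) (snd p)))"

definition semi_static :: "((nat \<Rightarrow> real) \<Rightarrow> real) \<Rightarrow> (nat \<Rightarrow> real) \<Rightarrow> bool" where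
  "semi_static \<phi> x \<longleftrightarrow>
     (\<forall>i j. i < j \<longrightarrow>
        ereal (\<Sum>n\<in>{i..<j}. \<phi> ((shift ^^ n) x) - alpha \<phi>)
          = mane_pot \<phi> ((shift ^^ i) x) ((shift ^^ j) x))"

definition mane_set :: "((nat \<Rightarrow> real) \<Rightarrow> real) \<Rightarrow> (nat \<Rightarrow> real) set" where
  "mane_set \<phi> = {(shift ^^ k) x | k x. x \<in> Xset \<and> semi_static \<phi> x}"

text \<open>h is C^2 on the closed square [0,1]^2 (derivatives within the square), with
  first partials h1, h2 and second partials hij = D_j (h_i); D2 D1 h = h12.\<close>
definition C2_square_neg_mixed :: "(real \<times> real \<Rightarrow> real) \<Rightarrow> bool" where
  "C2_square_neg_mixed h \<longleftrightarrow>
    (\<exists>h1 h2 h11 h12 h21 h22.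
      (\<forall>p\<in>{0..1} \<times> {0..1}.
         (h has_derivative (\<lambda>(u, v). h1 p * u + h2 p * v)) (at p within {0..1} \<times> {0..1}) \<and>
         (h1 has_derivative (\<lambda>(u, v). h11 p * u + h12 p * v)) (at p within {0..1} \<times> {0..1}) \<and>
         (h2 has_derivative (\<lambda>(u, v). h21 p * u + h22 p * v)) (at p within {0..1} \<times> {0..1}) \<and>
         h12 p < 0) \<and>
      continuous_on ({0..1} \<times> {0..1}) h11 \<and> continuous_on ({0..1} \<times> {0..1}) h12 \<and>
      continuous_on ({0..1} \<times> {0..1}) h21 \<and> continuous_on ({0..1} \<times> {0..1}) h22)"

definition hstar :: "(real \<times> real \<Rightarrow> real) \<Rightarrow> real" where
  "hstar h = (INF a\<in>{0..1}. h (a, a))"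

definition min_set :: "(real \<times> real \<Rightarrow> real) \<Rightarrow> real set" where
  "min_set h = {a \<in> {0..1}. h (a, a) = hstar h}"

end

theory Submission
  imports Defs
begin

text \<open>Let \<open>u\<close> be a primitive of \<open>s \<mapsto> D\<^sub>1 h (s, s)\<close>. The twist condition makes
  \<open>t \<mapsto> h (t, y) - u t\<close> strictly minimal at \<open>t = y\<close>, so
  \<open>h (x, y) \<ge> h (y, y) + u x - u y \<ge> h\<^sup>* + u x - u y\<close>, with equality throughout only
  for \<open>x = y \<in> m\<^sub>h\<close>. Integrating against invariant measures gives \<open>\<alpha> = h\<^sup>*\<close>, attained
  by the Dirac masses at the fixed points \<open>a\<^sup>\<infinity>\<close>, \<open>a \<in> m\<^sub>h\<close>. Hence Birkhoff sums
  of \<open>\<phi> - \<alpha>\<close> are telescoping \<open>u\<close>-differences plus non-negative excesses, and the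
  Mane potential between two points of an orbit is the action of the orbit segment
  between them as soon as every periodic stretch of the orbit has zero action.
  Conversely a semi-static orbit must have this property, and a periodic stretch has
  zero action only if it is a fixed point \<open>a\<^sup>\<infinity>\<close> with \<open>a \<in> m\<^sub>h\<close>.\<close>


section \<open>Real analysis\<close>

abbreviation unit_square :: "(real \<times> real) set" where
  "unit_square \<equiv> {0..1} \<times> {0..1}"

lemma DERIV_within_pos_imp_less:
  fixes g g' :: "real \<Rightarrow> real"
  assumes "a < b"
    and deriv: "\<And>t. t \<in> {a..b} \<Longrightarrow> (g has_real_derivative g' t) (at t within {a..b})"
    and pos: "\<And>t. a < t \<Longrightarrow> t < b \<Longrightarrow> g' t > 0"
  shows "g a < g b"
proof (rule DERIV_pos_imp_increasing_open[OF \<open>a < b\<close>])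
  show "continuous_on {a..b} g"
    using deriv by (meson DERIV_continuous continuous_on_eq_continuous_within)
  fix t assume "a < t" "t < b"
  then show "\<exists>y. DERIV g t :> y \<and> y > 0"
    using deriv[of t] pos[of t] at_within_Icc_at[of a t b] by auto
qed

lemma has_derivative_partials_unit_square:
  fixes g :: "real \<times> real \<Rightarrow> real"
  assumes deriv: "(g has_derivative (\<lambda>(u, v). a * u + b * v)) (at (s, t) within unit_square)"
    and "s \<in> {0..1}" "t \<in> {0..1}"
  shows "((\<lambda>r. g (r, t)) has_real_derivative a) (at s within {0..1})"
    and "((\<lambda>r. g (s, r)) has_real_derivative b) (at t within {0..1})"
proof -
  have "(\<lambda>r. (r, t)) ` {0..1} \<subseteq> unit_square" "(\<lambda>r. (s, r)) ` {0..1} \<subseteq> unit_square"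
    using assms(2,3) by auto
  note deriv' = has_derivative_subset[OF deriv this(1)] has_derivative_subset[OF deriv this(2)]
  have "((\<lambda>r. (r, t)) has_derivative (\<lambda>r. (r, 0))) (at s within {0..1})"
    and "((\<lambda>r. (s, r)) has_derivative (\<lambda>r. (0, r))) (at t within {0..1})"
    by (auto intro!: derivative_eq_intros)
  from has_derivative_in_compose[OF this(1) deriv'(1)] has_derivative_in_compose[OF this(2) deriv'(2)]
  have "((\<lambda>r. g (r, t)) has_derivative (*) a) (at s within {0..1})"
    and "((\<lambda>r. g (s, r)) has_derivative (*) b) (at t within {0..1})"
    by (simp_all add: mult_commute_abs)
  then show "((\<lambda>r. g (r, t)) has_real_derivative a) (at s within {0..1})"
    and "((\<lambda>r. g (s, r)) has_real_derivative b) (at t within {0..1})"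
    by (simp_all add: has_field_derivative_def)
qed

lemma Lim_ereal_eqI:
  fixes I :: "'a \<Rightarrow> ereal" and c :: real
  assumes "F \<noteq> bot"
    and upper: "\<forall>\<^sub>F \<epsilon> in F. I \<epsilon> \<le> ereal c"
    and lower: "\<And>\<delta>. \<delta> > 0 \<Longrightarrow> \<forall>\<^sub>F \<epsilon> in F. ereal (c - \<delta>) \<le> I \<epsilon>"
  shows "Lim F I = ereal c"
proof -
  have "(I \<longlongrightarrow> ereal c) F"
  proof (rule order_tendstoI)
    fix a assume "a < ereal c"
    then obtain \<delta> where "\<delta> > 0" "a < ereal (c - \<delta>)"
    proof (cases a)
      case (real r)
      with \<open>a < ereal c\<close> show ?thesis
        by (intro that[of "(c - r) / 2"]) (auto simp: field_simps)
    qed (use that[of 1] \<open>a < ereal c\<close> in auto)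
    with lower[OF \<open>\<delta> > 0\<close>] show "\<forall>\<^sub>F \<epsilon> in F. a < I \<epsilon>"
      by (auto elim: eventually_mono intro: less_le_trans)
  next
    fix a assume "ereal c < a"
    with upper show "\<forall>\<^sub>F \<epsilon> in F. I \<epsilon> < a"
      by (auto elim: eventually_mono intro: le_less_trans)
  qed
  with assms(1) show ?thesis
    by (simp add: tendsto_Lim)
qed

section \<open>The shift space\<close>

lemma shift_pow_apply: "(shift ^^ n) x i = x (n + i)"
  by (induction n arbitrary: i) (auto simp: shift_def)

lemma shift_pow_shift_pow: "(shift ^^ i) ((shift ^^ k) x) = (shift ^^ (i + k)) x"
  by (simp add: funpow_add)

lemma shift_pow_in_Xset: "x \<in> Xset \<Longrightarrow> (shift ^^ n) x \<in> Xset"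
  by (simp add: Xset_def shift_pow_apply)

lemma shift_in_Xset: "x \<in> Xset \<Longrightarrow> shift x \<in> Xset"
  by (simp add: Xset_def shift_def)

lemma shift_continuous: "continuous_on S shift"
  unfolding shift_def
  by (intro continuous_on_coordinatewise_then_product continuous_on_subset[OF continuous_on_product_coordinates])
    simp

lemma shift_pow_mult_periodic:
  assumes "(shift ^^ L) y = y"
  shows "(shift ^^ (t * L)) y = y"
  by (induction t) (simp_all add: funpow_add assms)

lemma shift_periodic:
  assumes "(shift ^^ L) y = y"
  shows "y (t * L + k) = y k"
  by (metis shift_pow_apply shift_pow_mult_periodic[OF assms])

lemma shift_pow_const: "(shift ^^ n) (\<lambda>_. a) = (\<lambda>_. a)"
  by (simp add: fun_eq_iff shift_pow_apply)

lemma shift_pow_cycle: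
  assumes "i \<le> j" "(shift ^^ i) x = (shift ^^ j) x"
  shows "(shift ^^ (j - i)) ((shift ^^ i) x) = (shift ^^ i) x"
proof -
  have "(shift ^^ (j - i)) ((shift ^^ i) x) = (shift ^^ j) x"
    using assms(1) by (simp add: shift_pow_shift_pow)
  with assms(2) show ?thesis
    by simp
qed

lemma periodic_eventually_const:
  assumes "0 < L" "(shift ^^ L) y = y" "(shift ^^ M) y = (\<lambda>_. a)"
  shows "y = (\<lambda>_. a)"
proof -
  have "(shift ^^ (M * L)) y = y"
    using assms(2) by (rule shift_pow_mult_periodic)
  moreover have "M \<le> M * L"
    using assms(1) by simp
  then have "(shift ^^ (M * L)) y = (shift ^^ (M * L - M)) ((shift ^^ M) y)"
    by (simp add: shift_pow_shift_pow)
  ultimately show ?thesis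
    using assms(3) by (simp add: shift_pow_const)
qed

lemma dX_summable:
  assumes "y \<in> Xset" "z \<in> Xset"
  shows "summable (\<lambda>k. \<bar>y k - z k\<bar> / 2 ^ (k + 1))"
proof (rule summable_comparison_test')
  show "summable (\<lambda>k. (1/2::real) ^ k)"
    by (rule summable_geometric) simp
  fix k :: nat
  have "y k \<in> {0..1}" "z k \<in> {0..1}"
    using assms by (auto simp: Xset_def)
  then have "\<bar>y k - z k\<bar> \<le> 1"
    by auto
  then have "\<bar>y k - z k\<bar> / 2 ^ (k + 1) \<le> 1 / 2 ^ (k + 1)"
    by (intro divide_right_mono) auto
  also have "\<dots> \<le> (1/2) ^ k"
    by (simp add: power_divide frac_le)
  finally show "norm (\<bar>y k - z k\<bar> / 2 ^ (k + 1)) \<le> (1/2::real) ^ k"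
    by simp
qed

lemma dX_commute: "dX y z = dX z y"
  by (simp add: dX_def abs_minus_commute)

lemma dX_nonneg: "y \<in> Xset \<Longrightarrow> z \<in> Xset \<Longrightarrow> 0 \<le> dX y z"
  unfolding dX_def by (intro suminf_nonneg dX_summable) auto

lemma dX_self: "dX y y = 0"
  by (simp add: dX_def)

lemma coord_dist_le_dX:
  assumes "y \<in> Xset" "z \<in> Xset"
  shows "\<bar>y k - z k\<bar> \<le> 2 ^ (k + 1) * dX y z"
proof -
  have "(\<Sum>n\<in>{k}. \<bar>y n - z n\<bar> / 2 ^ (n + 1)) \<le> dX y z"
    unfolding dX_def by (rule sum_le_suminf[OF dX_summable[OF assms]]) auto
  then show ?thesis
    by (simp add: divide_le_eq mult.commute)
qed

lemma eventually_coords_close: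
  assumes "\<rho> > 0"
  shows "\<forall>\<^sub>F \<epsilon> in at_right 0. \<forall>y\<in>Xset. \<forall>z\<in>Xset. dX y z < \<epsilon> \<longrightarrow> (\<forall>k\<le>N. \<bar>y k - z k\<bar> < \<rho>)"
  unfolding eventually_at_right_field
proof (intro exI[of _ "\<rho> / 2 ^ (N + 1)"] conjI allI impI ballI)
  show "0 < \<rho> / 2 ^ (N + 1)"
    using assms by simp
  fix \<epsilon> y z k
  assume "\<epsilon> < \<rho> / 2 ^ (N + 1)" "y \<in> Xset" "z \<in> Xset" "dX y z < \<epsilon>" "k \<le> N"
  have "2 ^ (k + 1) * dX y z \<le> 2 ^ (N + 1) * dX y z"
    using \<open>k \<le> N\<close> dX_nonneg[OF \<open>y \<in> Xset\<close> \<open>z \<in> Xset\<close>]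
    by (intro mult_right_mono power_increasing) auto
  also have "\<dots> < 2 ^ (N + 1) * \<epsilon>"
    using \<open>dX y z < \<epsilon>\<close> by simp
  also have "\<dots> < \<rho>"
    using \<open>\<epsilon> < \<rho> / 2 ^ (N + 1)\<close> by (simp add: pos_less_divide_eq mult.commute)
  finally show "\<bar>y k - z k\<bar> < \<rho>"
    using coord_dist_le_dX[OF \<open>y \<in> Xset\<close> \<open>z \<in> Xset\<close>, of k] by linarith
qed

lemma eventually_Bset_empty:
  assumes "y \<in> Xset" "w \<in> Xset" "(shift ^^ n) y \<noteq> w"
  shows "\<forall>\<^sub>F \<epsilon> in at_right 0. Bset y w n \<epsilon> = {}"
proof -
  obtain k where k: "y (n + k) \<noteq> w k"
    using assms(3) by (auto simp: fun_eq_iff shift_pow_apply)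
  define gap where "gap = \<bar>y (n + k) - w k\<bar>"
  have "gap > 0"
    using k by (simp add: gap_def)
  then have "\<forall>\<^sub>F \<epsilon> in at_right 0. \<forall>y\<in>Xset. \<forall>z\<in>Xset. dX y z < \<epsilon> \<longrightarrow> (\<forall>i\<le>n + k. \<bar>y i - z i\<bar> < gap / 2)"
    by (intro eventually_coords_close) simp
  then show ?thesis
  proof eventually_elim
    case (elim \<epsilon>)
    show ?case
    proof (rule ccontr)
      assume "Bset y w n \<epsilon> \<noteq> {}"
      then obtain z where z: "z \<in> Xset" "dX y z < \<epsilon>" "dX ((shift ^^ n) z) w < \<epsilon>"
        by (auto simp: Bset_def)
      have "\<bar>y (n + k) - z (n + k)\<bar> < gap / 2"
        using elim[rule_format, OF assms(1) z(1,2)] by simp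
      moreover have "\<bar>(shift ^^ n) z k - w k\<bar> < gap / 2"
        using elim[rule_format, OF shift_pow_in_Xset[OF z(1)] assms(2) z(3)] by (simp add: abs_minus_commute)
      moreover have "gap \<le> \<bar>y (n + k) - z (n + k)\<bar> + \<bar>z (n + k) - w k\<bar>"
        using dist_triangle[of "y (n + k)" "w k" "z (n + k)"] by (simp add: gap_def dist_real_def)
      ultimately show False
        unfolding gap_def shift_pow_apply by argo
    qed
  qed
qed

section \<open>Invariant measures\<close>

lemma space_invariant_measure:
  assumes "invariant_measure \<mu>"
  shows "space \<mu> = Xset"
proof -
  have "sets \<mu> = sets (restrict_space borel Xset)"
    using assms by (simp add: invariant_measure_def)
  then show ?thesis
    by (simp add: sets_eq_imp_space_eq space_restrict_space)
qed

lemma borel_measurable_invariant_measure: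
  fixes g :: "(nat \<Rightarrow> real) \<Rightarrow> real"
  assumes "invariant_measure \<mu>" "continuous_on Xset g"
  shows "g \<in> borel_measurable \<mu>"
proof -
  have "g \<in> borel_measurable (restrict_space borel Xset)"
    using assms(2) by (rule borel_measurable_continuous_on_restrict)
  moreover have "sets \<mu> = sets (restrict_space borel Xset)"
    using assms(1) by (simp add: invariant_measure_def)
  ultimately show ?thesis
    using measurable_cong_sets[of \<mu> "restrict_space borel Xset" borel borel] by simp
qed

lemma integrable_invariant_measure:
  fixes g :: "(nat \<Rightarrow> real) \<Rightarrow> real"
  assumes \<mu>: "invariant_measure \<mu>" and "continuous_on Xset g" "bounded (g ` Xset)"
  shows "integrable \<mu> g"
proof -
  interpret prob_space \<mu>
    using \<mu> by (simp add: invariant_measure_def)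
  obtain B where "\<And>x. x \<in> Xset \<Longrightarrow> \<bar>g x\<bar> \<le> B"
    using \<open>bounded (g ` Xset)\<close> by (auto simp: bounded_iff)
  then show ?thesis
    using borel_measurable_invariant_measure[OF assms(1,2)] space_invariant_measure[OF \<mu>]
    by (intro integrable_const_bound[where B = B]) (auto intro!: AE_I2)
qed

text \<open>Invariance of \<open>\<mu>\<close> kills the integral of the coboundary \<open>u - u \<circ> shift\<close>.\<close>

lemma integral_ge_if_coboundary_le:
  fixes \<phi> u :: "(nat \<Rightarrow> real) \<Rightarrow> real"
  assumes \<mu>: "invariant_measure \<mu>"
    and cont: "continuous_on Xset \<phi>" "continuous_on Xset u"
    and bdd: "bounded (\<phi> ` Xset)" "bounded (u ` Xset)"
    and le: "\<And>x. x \<in> Xset \<Longrightarrow> c + u x - u (shift x) \<le> \<phi> x"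
  shows "c \<le> integral\<^sup>L \<mu> \<phi>"
proof -
  interpret prob_space \<mu>
    using \<mu> by (simp add: invariant_measure_def)
  have u_shift: "continuous_on Xset (\<lambda>x. u (shift x))"
    by (rule continuous_on_compose2[OF cont(2) shift_continuous]) (auto simp: shift_in_Xset)
  have "bounded ((\<lambda>x. u (shift x)) ` Xset)"
    by (rule bounded_subset[OF bdd(2)]) (auto simp: shift_in_Xset)
  then have int_u_shift: "integrable \<mu> (\<lambda>x. u (shift x))"
    by (rule integrable_invariant_measure[OF \<mu> u_shift])
  have int_u: "integrable \<mu> u"
    by (rule integrable_invariant_measure[OF \<mu> cont(2) bdd(2)])
  have shift_meas: "shift \<in> measurable \<mu> \<mu>" and shift_inv: "distr \<mu> \<mu> shift = \<mu>"
    using \<mu> by (simp_all add: invariant_measure_def)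
  have "integral\<^sup>L \<mu> (\<lambda>x. u (shift x)) = integral\<^sup>L (distr \<mu> \<mu> shift) u"
    using integral_distr[OF shift_meas borel_measurable_invariant_measure[OF \<mu> cont(2)]] by simp
  also have "\<dots> = integral\<^sup>L \<mu> u"
    by (simp only: shift_inv)
  finally have "c = integral\<^sup>L \<mu> (\<lambda>x. c + u x - u (shift x))"
    using int_u int_u_shift by (simp add: prob_space)
  also have "\<dots> \<le> integral\<^sup>L \<mu> \<phi>"
    using int_u int_u_shift integrable_invariant_measure[OF \<mu> cont(1) bdd(1)] le
      space_invariant_measure[OF \<mu>]
    by (intro integral_mono) auto
  finally show ?thesis .
qed

lemma invariant_measure_return_const:
  assumes "a \<in> {0..1}"
  shows "invariant_measure (return (restrict_space borel Xset) (\<lambda>_. a))"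
proof -
  let ?M = "restrict_space borel Xset"
  let ?R = "return ?M (\<lambda>_. a)"
  have a: "(\<lambda>_. a) \<in> space ?M"
    using assms by (simp add: Xset_def space_restrict_space)
  have shift_M: "shift \<in> measurable ?M ?M"
    by (rule measurable_restrict_space3[OF borel_measurable_continuous_onI[OF shift_continuous]])
       (auto simp: shift_in_Xset)
  have sets_R: "sets ?R = sets ?M"
    by simp
  have shift_R: "shift \<in> measurable ?R ?R"
    using shift_M measurable_cong_sets[OF sets_R sets_R] by simp
  have "distr ?R ?R shift = return ?R (shift (\<lambda>_. a))"
    using a shift_M measurable_cong_sets[OF refl sets_R] by (intro distr_return) simp_all
  also have "\<dots> = ?R"
    by (simp add: shift_def return_cong[of ?R ?M])
  finally show ?thesis
    unfolding invariant_measure_def using prob_space_return[OF a] shift_R by simp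
qed

section \<open>Twist generating functions\<close>

text \<open>The hypothesis \<open>D\<^sub>2 D\<^sub>1 h < 0\<close> enters only through the resulting strict
  monotonicity of \<open>h1 = D\<^sub>1 h\<close> in the second variable.\<close>

locale twist =
  fixes h h1 :: "real \<times> real \<Rightarrow> real"
  assumes h_cont: "continuous_on unit_square h"
    and h1_cont: "continuous_on unit_square h1"
    and h_deriv1: "\<And>x y. x \<in> {0..1} \<Longrightarrow> y \<in> {0..1} \<Longrightarrow>
      ((\<lambda>t. h (t, y)) has_real_derivative h1 (x, y)) (at x within {0..1})"
    and twist_condition: "\<And>x y y'. x \<in> {0..1} \<Longrightarrow> 0 \<le> y \<Longrightarrow> y < y' \<Longrightarrow> y' \<le> 1 \<Longrightarrow>
      h1 (x, y') < h1 (x, y)"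
begin

definition sub_action :: "real \<Rightarrow> real" where
  "sub_action x = integral {0..x} (\<lambda>s. h1 (s, s))"

lemma sub_action_deriv:
  assumes "t \<in> {0..1}"
  shows "(sub_action has_real_derivative h1 (t, t)) (at t within {0..1})"
proof -
  have "continuous_on {0..1} (\<lambda>s. h1 (s, s))"
    by (rule continuous_on_compose2[OF h1_cont]) (auto intro!: continuous_intros)
  then show ?thesis
    unfolding sub_action_def[abs_def] using assms by (rule integral_has_real_derivative)
qed

lemma sub_action_cont: "continuous_on {0..1} sub_action"
  using sub_action_deriv by (meson DERIV_continuous continuous_on_eq_continuous_within)

lemma h_gt_diag_coboundary:
  assumes x: "x \<in> {0..1}" and y: "y \<in> {0..1}" and "x \<noteq> y"
  shows "h (y, y) + sub_action x - sub_action y < h (x, y)"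
proof -
  define g where "g t = sub_action t - h (t, y)" for t
  have g_deriv: "(g has_real_derivative h1 (t, t) - h1 (t, y)) (at t within {a..b})"
    if "t \<in> {a..b}" "{a..b} \<subseteq> {0..1}" for a b t
    unfolding g_def using that y
    by (intro DERIV_subset[OF DERIV_diff[OF sub_action_deriv h_deriv1]]) auto
  have "g x < g y"
  proof (cases "x < y")
    case True
    show ?thesis
    proof (rule DERIV_within_pos_imp_less[OF True])
      show "(g has_real_derivative h1 (t, t) - h1 (t, y)) (at t within {x..y})" if "t \<in> {x..y}" for t
        using that x y by (intro g_deriv) auto
      show "0 < h1 (t, t) - h1 (t, y)" if "x < t" "t < y" for t
        using that x y twist_condition[of t t y] by auto
    qed
  next
    case False
    with \<open>x \<noteq> y\<close> have "y < x"
      by simp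
    have "(\<lambda>t. - g t) y < (\<lambda>t. - g t) x"
    proof (rule DERIV_within_pos_imp_less[OF \<open>y < x\<close>])
      show "((\<lambda>t. - g t) has_real_derivative - (h1 (t, t) - h1 (t, y))) (at t within {y..x})"
        if "t \<in> {y..x}" for t
        using that x y by (intro DERIV_minus g_deriv) auto
      show "0 < - (h1 (t, t) - h1 (t, y))" if "y < t" "t < x" for t
        using that x y twist_condition[of t y t] by auto
    qed
    then show ?thesis
      by simp
  qed
  then show ?thesis
    by (simp add: g_def)
qed

lemma h_ge_diag_coboundary:
  "x \<in> {0..1} \<Longrightarrow> y \<in> {0..1} \<Longrightarrow> h (y, y) + sub_action x - sub_action y \<le> h (x, y)"
  using h_gt_diag_coboundary[of x y] by (cases "x = y") auto

lemma diag_cont: "continuous_on {0..1} (\<lambda>a. h (a, a))"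
  by (rule continuous_on_compose2[OF h_cont]) (auto intro!: continuous_intros)

lemma hstar_le: "a \<in> {0..1} \<Longrightarrow> hstar h \<le> h (a, a)"
  unfolding hstar_def
proof (rule cINF_lower)
  have "bounded ((\<lambda>a. h (a, a)) ` {0..1})"
    by (intro compact_imp_bounded compact_continuous_image diag_cont) auto
  then show "bdd_below ((\<lambda>a. h (a, a)) ` {0..1})"
    by (rule bounded_imp_bdd_below)
qed

lemma hstar_attained:
  obtains a where "a \<in> min_set h"
proof -
  obtain a where a: "a \<in> {0..1}" "\<forall>b\<in>{0..1}. h (a, a) \<le> h (b, b)"
    using continuous_attains_inf[OF _ _ diag_cont] by auto
  have "h (a, a) \<le> hstar h"
    unfolding hstar_def by (rule cINF_greatest) (use a in auto)
  then have "hstar h = h (a, a)"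
    using hstar_le[OF a(1)] by simp
  with a(1) show ?thesis
    by (intro that[of a]) (simp add: min_set_def)
qed

definition excess :: "real \<Rightarrow> real \<Rightarrow> real" where
  "excess x y = h (x, y) - hstar h - (sub_action x - sub_action y)"

lemma excess_nonneg: "x \<in> {0..1} \<Longrightarrow> y \<in> {0..1} \<Longrightarrow> 0 \<le> excess x y"
  using h_ge_diag_coboundary[of x y] hstar_le[of y] by (simp add: excess_def)

lemma excess_eq_0_iff:
  assumes "x \<in> {0..1}" "y \<in> {0..1}"
  shows "excess x y = 0 \<longleftrightarrow> x = y \<and> y \<in> min_set h"
  using h_gt_diag_coboundary[OF assms] hstar_le[OF assms(2)] assms
  by (cases "x = y") (auto simp: excess_def min_set_def)

abbreviation phi :: "(nat \<Rightarrow> real) \<Rightarrow> real" where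
  "phi x \<equiv> h (x 0, x 1)"

lemma phi_cont: "continuous_on Xset phi"
proof -
  have "continuous_on Xset (\<lambda>x::nat \<Rightarrow> real. (x 0, x 1))"
    by (intro continuous_intros continuous_on_subset[OF continuous_on_product_coordinates]) simp_all
  then show ?thesis
    by (rule continuous_on_compose2[OF h_cont]) (auto simp: Xset_def)
qed

lemma phi_bounded: "bounded (phi ` Xset)"
proof -
  have "bounded (h ` unit_square)"
    by (intro compact_imp_bounded compact_continuous_image h_cont compact_Times) auto
  then show ?thesis
    by (rule bounded_subset) (auto simp: Xset_def)
qed

lemma alpha_phi: "alpha phi = hstar h"
proof -
  obtain a where a: "a \<in> min_set h"
    by (rule hstar_attained)
  let ?\<delta>\<^sub>a = "return (restrict_space borel Xset) (\<lambda>_. a)"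
  have \<delta>_inv: "invariant_measure ?\<delta>\<^sub>a"
    using a by (intro invariant_measure_return_const) (simp add: min_set_def)
  have \<delta>_int: "integral\<^sup>L ?\<delta>\<^sub>a phi = hstar h"
    using a borel_measurable_continuous_on_restrict[OF phi_cont]
    by (subst integral_return) (auto simp: min_set_def Xset_def space_restrict_space)
  have lower: "hstar h \<le> integral\<^sup>L \<mu> phi" if "invariant_measure \<mu>" for \<mu>
  proof (rule integral_ge_if_coboundary_le[OF that phi_cont _ phi_bounded])
    have "continuous_on Xset (\<lambda>x::nat \<Rightarrow> real. x 0)"
      by (rule continuous_on_subset[OF continuous_on_product_coordinates]) simp
    then show "continuous_on Xset (\<lambda>x. sub_action (x 0))"
      by (rule continuous_on_compose2[OF sub_action_cont]) (auto simp: Xset_def)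
    have "bounded (sub_action ` {0..1})"
      by (intro compact_imp_bounded compact_continuous_image sub_action_cont) auto
    then show "bounded ((\<lambda>x. sub_action (x 0)) ` Xset)"
      by (rule bounded_subset) (auto simp: Xset_def)
    show "hstar h + sub_action (x 0) - sub_action (shift x 0) \<le> phi x" if "x \<in> Xset" for x
      using that h_ge_diag_coboundary[of "x 0" "x 1"] hstar_le[of "x 1"]
      by (auto simp: Xset_def shift_def)
  qed
  show ?thesis
    unfolding alpha_def
  proof (rule cInf_eq_minimum)
    show "hstar h \<in> {integral\<^sup>L \<mu> phi |\<mu>. invariant_measure \<mu>}"
      using \<delta>_inv \<delta>_int by force
  qed (use lower in blast)
qed

end

lemma twist_if_C2_square_neg_mixed:
  assumes "C2_square_neg_mixed h"
  obtains h1 where "twist h h1"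
proof -
  obtain h1 h2 h11 h12 h21 h22 where H: "\<forall>p\<in>unit_square.
      (h has_derivative (\<lambda>(u, v). h1 p * u + h2 p * v)) (at p within unit_square) \<and>
      (h1 has_derivative (\<lambda>(u, v). h11 p * u + h12 p * v)) (at p within unit_square) \<and>
      (h2 has_derivative (\<lambda>(u, v). h21 p * u + h22 p * v)) (at p within unit_square) \<and>
      h12 p < 0"
    using assms unfolding C2_square_neg_mixed_def by blast
  have h_deriv: "(h has_derivative (\<lambda>(u, v). h1 p * u + h2 p * v)) (at p within unit_square)"
    and h1_deriv: "(h1 has_derivative (\<lambda>(u, v). h11 p * u + h12 p * v)) (at p within unit_square)"
    and h12_neg: "h12 p < 0"
    if "p \<in> unit_square" for p
    using H that by blast+
  have "twist h h1"
  proof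
    show "continuous_on unit_square h"
      using h_deriv by (rule has_derivative_continuous_on)
    show "continuous_on unit_square h1"
      using h1_deriv by (rule has_derivative_continuous_on)
    show "((\<lambda>t. h (t, y)) has_real_derivative h1 (x, y)) (at x within {0..1})"
      if "x \<in> {0..1}" "y \<in> {0..1}" for x y
      using has_derivative_partials_unit_square(1)[OF h_deriv] that by simp
    show "h1 (x, y') < h1 (x, y)" if "x \<in> {0..1}" "0 \<le> y" "y < y'" "y' \<le> 1" for x y y'
    proof -
      have "(\<lambda>t. - h1 (x, t)) y < (\<lambda>t. - h1 (x, t)) y'"
      proof (rule DERIV_within_pos_imp_less[OF \<open>y < y'\<close>])
        fix t assume "t \<in> {y..y'}"
        with that have "((\<lambda>t. h1 (x, t)) has_real_derivative h12 (x, t)) (at t within {0..1})"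
          using has_derivative_partials_unit_square(2)[OF h1_deriv] by simp
        moreover have "{y..y'} \<subseteq> {0..1}"
          using that by auto
        ultimately show "((\<lambda>t. - h1 (x, t)) has_real_derivative - h12 (x, t)) (at t within {y..y'})"
          by (intro DERIV_minus) (rule DERIV_subset)
      next
        fix t assume "y < t" "t < y'"
        with that show "0 < - h12 (x, t)"
          using h12_neg[of "(x, t)"] by simp
      qed
      then show ?thesis
        by simp
    qed
  qed
  then show ?thesis
    by (rule that)
qed

section \<open>Action and the Mane potential\<close>

context twist
begin

definition action :: "(nat \<Rightarrow> real) \<Rightarrow> nat \<Rightarrow> nat \<Rightarrow> real" where
  "action x i j = (\<Sum>n\<in>{i..<j}. h (x n, x (Suc n)) - hstar h)"

lemma bsum_phi: "bsum phi n z = action z 0 n"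
  unfolding bsum_def alpha_phi by (simp add: action_def shift_pow_apply atLeast0LessThan)

lemma action_shift: "action ((shift ^^ i) x) p q = action x (i + p) (i + q)"
  unfolding action_def shift_pow_apply
  using sum.shift_bounds_nat_ivl[of "\<lambda>n. h (x n, x (Suc n)) - hstar h" p i q]
  by (simp add: add.commute)

lemma action_split: "i \<le> k \<Longrightarrow> k \<le> j \<Longrightarrow> action x i j = action x i k + action x k j"
  unfolding action_def by (simp add: sum.atLeastLessThan_concat)

lemma action_eq_excess_sum:
  assumes "i \<le> j"
  shows "action x i j = (\<Sum>n\<in>{i..<j}. excess (x n) (x (Suc n))) + sub_action (x i) - sub_action (x j)"
proof -
  have "(\<Sum>n\<in>{i..<j}. sub_action (x (Suc n)) - sub_action (x n)) = sub_action (x j) - sub_action (x i)"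
    using assms by (rule sum_Suc_diff')
  moreover have "(\<Sum>n\<in>{i..<j}. excess (x n) (x (Suc n)))
      = action x i j + (\<Sum>n\<in>{i..<j}. sub_action (x (Suc n)) - sub_action (x n))"
    unfolding action_def excess_def sum.distrib[symmetric] by (rule sum.cong) simp_all
  ultimately show ?thesis
    by simp
qed

lemma sub_action_diff_le_action:
  assumes "x \<in> Xset" "i \<le> j"
  shows "sub_action (x i) - sub_action (x j) \<le> action x i j"
proof -
  have "0 \<le> (\<Sum>n\<in>{i..<j}. excess (x n) (x (Suc n)))"
    using assms(1) by (intro sum_nonneg excess_nonneg) (auto simp: Xset_def)
  then show ?thesis
    using action_eq_excess_sum[OF assms(2)] by simp
qed

lemma bsum_ge_split:
  assumes "z \<in> Xset" "L \<le> n"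
  shows "bsum phi L z + sub_action (z L) - sub_action (z n) \<le> bsum phi n z"
  using action_split[of 0 L n z] sub_action_diff_le_action[OF assms] assms(2)
  unfolding bsum_phi by simp

lemma eventually_bsum_close:
  assumes "\<eta> > 0"
  shows "\<forall>\<^sub>F \<epsilon> in at_right 0. \<forall>y\<in>Xset. \<forall>z\<in>Xset. dX y z < \<epsilon> \<longrightarrow> \<bar>bsum phi m y - bsum phi m z\<bar> < \<eta>"
proof -
  define \<eta>' where "\<eta>' = \<eta> / (m + 1)"
  have "\<eta>' > 0"
    using assms by (simp add: \<eta>'_def)
  have "uniformly_continuous_on unit_square h"
    by (rule compact_uniformly_continuous[OF h_cont]) (simp add: compact_Times)
  then obtain \<rho> where "\<rho> > 0"
    and \<rho>: "\<And>p q. p \<in> unit_square \<Longrightarrow> q \<in> unit_square \<Longrightarrow> dist p q < \<rho> \<Longrightarrow> dist (h p) (h q) < \<eta>'"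
    unfolding uniformly_continuous_on_def using \<open>\<eta>' > 0\<close> by metis
  have "\<forall>\<^sub>F \<epsilon> in at_right 0. \<forall>y\<in>Xset. \<forall>z\<in>Xset. dX y z < \<epsilon> \<longrightarrow> (\<forall>k\<le>m. \<bar>y k - z k\<bar> < \<rho> / 2)"
    using \<open>\<rho> > 0\<close> by (intro eventually_coords_close) simp
  then show ?thesis
  proof (rule eventually_mono, intro ballI impI)
    fix \<epsilon> y z
    assume close: "\<forall>y\<in>Xset. \<forall>z\<in>Xset. dX y z < \<epsilon> \<longrightarrow> (\<forall>k\<le>m. \<bar>y k - z k\<bar> < \<rho> / 2)"
      and yz: "y \<in> Xset" "z \<in> Xset" "dX y z < \<epsilon>"
    have "\<bar>h (y k, y (Suc k)) - h (z k, z (Suc k))\<bar> < \<eta>'" if "k < m" for k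
    proof -
      have "\<bar>y k - z k\<bar> < \<rho> / 2" "\<bar>y (Suc k) - z (Suc k)\<bar> < \<rho> / 2"
        using close yz that by auto
      then have "dist (y k, y (Suc k)) (z k, z (Suc k)) < \<rho>"
        unfolding dist_Pair_Pair dist_real_def by (intro sqrt_sum_squares_half_less) auto
      with yz show ?thesis
        using \<rho>[of "(y k, y (Suc k))" "(z k, z (Suc k))"] by (simp add: dist_real_def Xset_def)
    qed
    then have "(\<Sum>k<m. \<bar>h (y k, y (Suc k)) - h (z k, z (Suc k))\<bar>) \<le> real (card {..<m}) * \<eta>'"
      by (intro sum_bounded_above less_imp_le) simp
    moreover have "\<bar>bsum phi m y - bsum phi m z\<bar>
        \<le> (\<Sum>k<m. \<bar>h (y k, y (Suc k)) - h (z k, z (Suc k))\<bar>)"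
      unfolding bsum_phi action_def atLeast0LessThan sum_subtractf[symmetric] by (simp add: sum_abs)
    moreover have "real m * \<eta>' < \<eta>"
      using assms by (simp add: \<eta>'_def field_simps)
    ultimately show "\<bar>bsum phi m y - bsum phi m z\<bar> < \<eta>"
      by simp
  qed
qed

lemma eventually_sub_action_close:
  assumes "\<eta> > 0"
  shows "\<forall>\<^sub>F \<epsilon> in at_right 0. \<forall>y\<in>Xset. \<forall>z\<in>Xset. dX y z < \<epsilon> \<longrightarrow>
    \<bar>sub_action (y k) - sub_action (z k)\<bar> < \<eta>"
proof -
  have "uniformly_continuous_on {0..1} sub_action"
    by (rule compact_uniformly_continuous[OF sub_action_cont]) simp
  then obtain \<rho> where "\<rho> > 0"
    and \<rho>: "\<And>a b. a \<in> {0..1} \<Longrightarrow> b \<in> {0..1} \<Longrightarrow> dist a b < \<rho> \<Longrightarrow> dist (sub_action a) (sub_action b) < \<eta>"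
    unfolding uniformly_continuous_on_def using assms by metis
  have "\<forall>\<^sub>F \<epsilon> in at_right 0. \<forall>y\<in>Xset. \<forall>z\<in>Xset. dX y z < \<epsilon> \<longrightarrow> (\<forall>i\<le>k. \<bar>y i - z i\<bar> < \<rho>)"
    using \<open>\<rho> > 0\<close> by (rule eventually_coords_close)
  then show ?thesis
    by (rule eventually_mono) (use \<rho> in \<open>auto simp: dist_real_def Xset_def\<close>)
qed

definition zero_action_cycles :: "(nat \<Rightarrow> real) \<Rightarrow> bool" where
  "zero_action_cycles x \<longleftrightarrow> (\<forall>i j. i < j \<longrightarrow> (shift ^^ i) x = (shift ^^ j) x \<longrightarrow> action x i j = 0)"

lemma zero_action_cycles_shift:
  assumes "zero_action_cycles x"
  shows "zero_action_cycles ((shift ^^ k) x)"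
  using assms unfolding zero_action_cycles_def action_shift shift_pow_shift_pow
  by (metis add.commute add_less_cancel_left)

lemma action_le_bsum_if_shadowing:
  assumes cycles: "zero_action_cycles y" and z: "z \<in> Xset"
    and bsum_close: "\<And>m. m \<le> L \<Longrightarrow> \<bar>bsum phi m y - bsum phi m z\<bar> < \<eta>"
    and start_close: "\<bar>sub_action (y L) - sub_action (z L)\<bar> < \<eta>"
    and end_close: "\<bar>sub_action (y L) - sub_action (z n)\<bar> < \<eta>"
    and early_return: "n < L \<Longrightarrow> (shift ^^ n) y = (shift ^^ L) y"
  shows "action y 0 L - 3 * \<eta> \<le> bsum phi n z"
proof (cases "L \<le> n")
  case True
  text \<open>After shadowing \<open>y\<close> for \<open>L\<close> steps, the orbit of \<open>z\<close> spends at least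
    \<open>sub_action (z L) - sub_action (z n)\<close> before it is back near \<open>y L\<close>.\<close>
  show ?thesis
    using bsum_close[of L] bsum_ge_split[OF z True] start_close end_close
    unfolding bsum_phi abs_less_iff by simp
next
  case False
  then have "action y n L = 0"
    using cycles early_return by (simp add: zero_action_cycles_def)
  then have "action y 0 L = bsum phi n y"
    using action_split[of 0 n L y] False unfolding bsum_phi by simp
  then show ?thesis
    using bsum_close[of n] False unfolding abs_less_iff by simp
qed

lemma eventually_action_le_bsum:
  assumes y: "y \<in> Xset" and cycles: "zero_action_cycles y" and "\<delta> > 0"
  shows "\<forall>\<^sub>F \<epsilon> in at_right 0. \<forall>n. \<forall>z\<in>Bset y ((shift ^^ L) y) n \<epsilon>. action y 0 L - \<delta> \<le> bsum phi n z"
proof -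
  define w where "w = (shift ^^ L) y"
  have w: "w \<in> Xset" "w 0 = y L"
    using y by (simp_all add: w_def shift_pow_in_Xset shift_pow_apply)
  have "\<delta> / 3 > 0"
    using \<open>\<delta> > 0\<close> by simp
  have "\<forall>\<^sub>F \<epsilon> in at_right 0. \<forall>z\<in>Xset. dX y z < \<epsilon> \<longrightarrow> \<bar>bsum phi m y - bsum phi m z\<bar> < \<delta> / 3" for m
    using eventually_bsum_close[OF \<open>\<delta> / 3 > 0\<close>, of m] by (rule eventually_mono) (use y in blast)
  then have "\<forall>\<^sub>F \<epsilon> in at_right 0. \<forall>m\<in>{..L}. \<forall>z\<in>Xset. dX y z < \<epsilon> \<longrightarrow> \<bar>bsum phi m y - bsum phi m z\<bar> < \<delta> / 3"
    by (intro eventually_ball_finite) auto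
  moreover have "\<forall>\<^sub>F \<epsilon> in at_right 0. \<forall>z\<in>Xset. dX y z < \<epsilon> \<longrightarrow>
      \<bar>sub_action (y L) - sub_action (z L)\<bar> < \<delta> / 3"
    using eventually_sub_action_close[OF \<open>\<delta> / 3 > 0\<close>] by (rule eventually_mono) (use y in blast)
  moreover have "\<forall>\<^sub>F \<epsilon> in at_right 0. \<forall>z\<in>Xset. dX w z < \<epsilon> \<longrightarrow>
      \<bar>sub_action (w 0) - sub_action (z 0)\<bar> < \<delta> / 3"
    using eventually_sub_action_close[OF \<open>\<delta> / 3 > 0\<close>] by (rule eventually_mono) (use w in blast)
  moreover have "\<forall>\<^sub>F \<epsilon> in at_right 0. \<forall>n\<in>{..<L}. (shift ^^ n) y \<noteq> w \<longrightarrow> Bset y w n \<epsilon> = {}"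
    using eventually_Bset_empty[OF y w(1)] by (intro eventually_ball_finite) (auto elim: eventually_mono)
  ultimately show ?thesis
    unfolding w_def[symmetric]
  proof eventually_elim
    case (elim \<epsilon>)
    show ?case
    proof (intro allI ballI)
      fix n z assume z_B: "z \<in> Bset y w n \<epsilon>"
      then have z: "z \<in> Xset" "dX y z < \<epsilon>" "dX w ((shift ^^ n) z) < \<epsilon>"
        by (auto simp: Bset_def dX_commute)
      have "action y 0 L - 3 * (\<delta> / 3) \<le> bsum phi n z"
      proof (rule action_le_bsum_if_shadowing[OF cycles z(1)])
        show "\<bar>bsum phi m y - bsum phi m z\<bar> < \<delta> / 3" if "m \<le> L" for m
          using elim(1) z(1,2) that by blast
        show "\<bar>sub_action (y L) - sub_action (z L)\<bar> < \<delta> / 3"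
          using elim(2) z(1,2) by blast
        show "\<bar>sub_action (y L) - sub_action (z n)\<bar> < \<delta> / 3"
          using elim(3) shift_pow_in_Xset[OF z(1), of n] z(3) shift_pow_apply[of n z 0] w(2) by auto
        show "(shift ^^ n) y = (shift ^^ L) y" if "n < L"
          using elim(4) z_B that unfolding w_def by auto
      qed
      then show "action y 0 L - \<delta> \<le> bsum phi n z"
        by simp
    qed
  qed
qed

lemma mane_pot_orbit:
  assumes "y \<in> Xset" "zero_action_cycles y" "0 < L"
  shows "mane_pot phi y ((shift ^^ L) y) = ereal (action y 0 L)"
  unfolding mane_pot_def
proof (rule Lim_ereal_eqI)
  let ?B = "\<lambda>\<epsilon>. {(n, z). 1 \<le> n \<and> z \<in> Bset y ((shift ^^ L) y) n \<epsilon>}"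
  show "at_right (0::real) \<noteq> bot"
    by simp
  have upper: "(INF p\<in>?B \<epsilon>. ereal (bsum phi (fst p) (snd p))) \<le> ereal (action y 0 L)"
    if "\<epsilon> > 0" for \<epsilon>
  proof (rule INF_lower2)
    show "(L, y) \<in> ?B \<epsilon>"
      using assms that by (simp add: Bset_def dX_self)
  qed (unfold bsum_phi, simp)
  show "\<forall>\<^sub>F \<epsilon> in at_right 0. (INF p\<in>?B \<epsilon>. ereal (bsum phi (fst p) (snd p))) \<le> ereal (action y 0 L)"
    by (rule eventually_mono[OF eventually_at_right_less]) (rule upper)
  show "\<forall>\<^sub>F \<epsilon> in at_right 0. ereal (action y 0 L - \<delta>) \<le> (INF p\<in>?B \<epsilon>. ereal (bsum phi (fst p) (snd p)))"
    if "\<delta> > 0" for \<delta>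
    using eventually_action_le_bsum[OF assms(1,2) that, where L = L]
    by (rule eventually_mono) (auto intro!: INF_greatest)
qed

end

section \<open>Semi-static orbits\<close>

context twist
begin

lemma semi_static_phi_iff:
  "semi_static phi x \<longleftrightarrow>
    (\<forall>i j. i < j \<longrightarrow> ereal (action x i j) = mane_pot phi ((shift ^^ i) x) ((shift ^^ j) x))"
  unfolding semi_static_def alpha_phi by (simp add: action_def shift_pow_apply)

text \<open>A periodic stretch of a semi-static orbit has action equal to that of its double, hence zero.\<close>

lemma semi_static_iff_zero_action_cycles:
  assumes "x \<in> Xset"
  shows "semi_static phi x \<longleftrightarrow> zero_action_cycles x"
proof
  assume semi_static: "semi_static phi x"
  show "zero_action_cycles x"
    unfolding zero_action_cycles_def
  proof (intro allI impI)
    fix i j assume "i < j" and cycle: "(shift ^^ i) x = (shift ^^ j) x"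
    define L where "L = j - i"
    have "(shift ^^ (j + L)) x = (shift ^^ L) ((shift ^^ j) x)"
      by (simp add: shift_pow_shift_pow add.commute)
    also have "\<dots> = (shift ^^ L) ((shift ^^ i) x)"
      by (simp only: cycle)
    also have "\<dots> = (shift ^^ j) x"
      using \<open>i < j\<close> by (simp add: shift_pow_shift_pow L_def)
    finally have "mane_pot phi ((shift ^^ i) x) ((shift ^^ (j + L)) x)
        = mane_pot phi ((shift ^^ i) x) ((shift ^^ j) x)"
      by simp
    moreover have "ereal (action x i j) = mane_pot phi ((shift ^^ i) x) ((shift ^^ j) x)"
      and "ereal (action x i (j + L)) = mane_pot phi ((shift ^^ i) x) ((shift ^^ (j + L)) x)"
      using semi_static \<open>i < j\<close> unfolding semi_static_phi_iff by auto
    ultimately have "action x i (j + L) = action x i j"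
      by (metis ereal.inject)
    moreover have "action x j (j + L) = action x i j"
      using action_shift[of j x 0 L] action_shift[of i x 0 L] cycle \<open>i < j\<close> by (simp add: L_def)
    ultimately show "action x i j = 0"
      using action_split[of i j "j + L" x] \<open>i < j\<close> by simp
  qed
next
  assume cycles: "zero_action_cycles x"
  show "semi_static phi x"
    unfolding semi_static_phi_iff
  proof (intro allI impI)
    fix i j :: nat assume "i < j"
    then have "(shift ^^ j) x = (shift ^^ (j - i)) ((shift ^^ i) x)"
      by (simp add: shift_pow_shift_pow)
    then show "ereal (action x i j) = mane_pot phi ((shift ^^ i) x) ((shift ^^ j) x)"
      using mane_pot_orbit[OF shift_pow_in_Xset[OF assms] zero_action_cycles_shift[OF cycles], of "j - i" i]
        action_shift[of i x 0 "j - i"] \<open>i < j\<close> by simp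
  qed
qed

lemma mane_set_phi: "mane_set phi = {x \<in> Xset. zero_action_cycles x}"
proof (intro set_eqI iffI)
  fix y assume "y \<in> mane_set phi"
  then obtain k x where "y = (shift ^^ k) x" "x \<in> Xset" "semi_static phi x"
    unfolding mane_set_def by blast
  then show "y \<in> {x \<in> Xset. zero_action_cycles x}"
    using semi_static_iff_zero_action_cycles shift_pow_in_Xset zero_action_cycles_shift by blast
next
  fix x assume "x \<in> {x \<in> Xset. zero_action_cycles x}"
  then have "(shift ^^ 0) x \<in> mane_set phi"
    using semi_static_iff_zero_action_cycles unfolding mane_set_def by blast
  then show "x \<in> mane_set phi"
    by simp
qed

text \<open>On a cycle the sub-action telescopes away, so zero action forces every excess to vanish.\<close>

lemma periodic_zero_action_imp_const:
  assumes y: "y \<in> Xset" and "0 < L" and periodic: "(shift ^^ L) y = y" and "action y 0 L = 0"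
  shows "y = (\<lambda>_. y 0)" "y 0 \<in> min_set h"
proof -
  have y01: "y k \<in> {0..1}" for k
    using y by (simp add: Xset_def)
  have "y L = y 0"
    using shift_periodic[OF periodic, of 1 0] by simp
  then have "(\<Sum>n\<in>{0..<L}. excess (y n) (y (Suc n))) = 0"
    using action_eq_excess_sum[of 0 L y] \<open>action y 0 L = 0\<close> by simp
  moreover have "0 \<le> excess (y n) (y (Suc n))" for n
    using excess_nonneg y01 by blast
  ultimately have "excess (y n) (y (Suc n)) = 0" if "n < L" for n
    using that by (simp add: sum_nonneg_eq_0_iff)
  then have step: "y (Suc n) = y n \<and> y (Suc n) \<in> min_set h" if "n < L" for n
    using that excess_eq_0_iff[of "y n" "y (Suc n)"] y01 by auto
  have const_L: "y k = y 0" if "k \<le> L" for k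
    using that
  proof (induction k)
    case (Suc k)
    then show ?case
      using step[of k] by simp
  qed simp
  show "y = (\<lambda>_. y 0)"
  proof
    fix k
    have "y k = y (k div L * L + k mod L)"
      by simp
    also have "\<dots> = y (k mod L)"
      by (rule shift_periodic[OF periodic])
    also have "\<dots> = y 0"
      using const_L[of "k mod L"] \<open>0 < L\<close> by (simp add: less_imp_le)
    finally show "y k = y 0" .
  qed
  show "y 0 \<in> min_set h"
    using step[OF \<open>0 < L\<close>] by metis
qed

lemma action_const: "action (\<lambda>_. a) i j = real (j - i) * (h (a, a) - hstar h)"
  by (simp add: action_def)

lemma zero_action_cycle_imp_fixed:
  assumes x: "x \<in> Xset" and cycles: "zero_action_cycles x"
    and "i < j" and cycle: "(shift ^^ i) x = (shift ^^ j) x"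
  shows "\<exists>a\<in>min_set h. (shift ^^ i) x = (\<lambda>_. a)"
proof -
  define y where "y = (shift ^^ i) x"
  have "y \<in> Xset"
    using x by (simp add: y_def shift_pow_in_Xset)
  moreover have "(shift ^^ (j - i)) y = y"
    using shift_pow_cycle[OF _ cycle] \<open>i < j\<close> by (simp add: y_def)
  moreover have "action y 0 (j - i) = action x i j"
    using \<open>i < j\<close> by (simp add: y_def action_shift)
  moreover have "action x i j = 0"
    using cycles cycle \<open>i < j\<close> unfolding zero_action_cycles_def by blast
  ultimately have "y = (\<lambda>_. y 0)" "y 0 \<in> min_set h"
    using periodic_zero_action_imp_const[of y "j - i"] \<open>i < j\<close> by simp_all
  then show ?thesis
    unfolding y_def by blast
qed

lemma zero_action_cycles_if_eventually_fixed:
  assumes a: "a \<in> min_set h" and fixed: "(shift ^^ M) x = (\<lambda>_. a)"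
  shows "zero_action_cycles x"
  unfolding zero_action_cycles_def
proof (intro allI impI)
  fix i j assume "i < j" and cycle: "(shift ^^ i) x = (shift ^^ j) x"
  have "(shift ^^ M) ((shift ^^ i) x) = (shift ^^ i) ((shift ^^ M) x)"
    by (simp add: shift_pow_shift_pow add.commute)
  then have "(shift ^^ M) ((shift ^^ i) x) = (\<lambda>_. a)"
    using fixed by (simp add: shift_pow_const)
  moreover have "(shift ^^ (j - i)) ((shift ^^ i) x) = (shift ^^ i) x"
    using shift_pow_cycle[OF _ cycle] \<open>i < j\<close> by simp
  ultimately have "(shift ^^ i) x = (\<lambda>_. a)"
    using periodic_eventually_const[of "j - i"] \<open>i < j\<close> by simp
  then have "action x i j = action (\<lambda>_. a) 0 (j - i)"
    using action_shift[of i x 0 "j - i"] \<open>i < j\<close> by simp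
  then show "action x i j = 0"
    using a by (simp add: action_const min_set_def)
qed

lemma zero_action_cycles_iff:
  assumes "x \<in> Xset"
  shows "zero_action_cycles x \<longleftrightarrow>
    (\<forall>i j. i \<noteq> j \<longrightarrow> (shift ^^ i) x \<noteq> (shift ^^ j) x) \<or> (\<exists>M. \<exists>a\<in>min_set h. (shift ^^ M) x = (\<lambda>_. a))"
proof
  assume cycles: "zero_action_cycles x"
  show "(\<forall>i j. i \<noteq> j \<longrightarrow> (shift ^^ i) x \<noteq> (shift ^^ j) x) \<or> (\<exists>M. \<exists>a\<in>min_set h. (shift ^^ M) x = (\<lambda>_. a))"
  proof (cases "\<forall>i j. i \<noteq> j \<longrightarrow> (shift ^^ i) x \<noteq> (shift ^^ j) x")
    case False
    then obtain i j where "i < j" "(shift ^^ i) x = (shift ^^ j) x"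
      by (metis linorder_neqE_nat)
    then show ?thesis
      using zero_action_cycle_imp_fixed[OF assms cycles] by blast
  qed simp
next
  assume "(\<forall>i j. i \<noteq> j \<longrightarrow> (shift ^^ i) x \<noteq> (shift ^^ j) x) \<or> (\<exists>M. \<exists>a\<in>min_set h. (shift ^^ M) x = (\<lambda>_. a))"
  then show "zero_action_cycles x"
  proof
    assume "\<forall>i j. i \<noteq> j \<longrightarrow> (shift ^^ i) x \<noteq> (shift ^^ j) x"
    then show ?thesis
      by (simp add: zero_action_cycles_def)
  qed (blast intro: zero_action_cycles_if_eventually_fixed)
qed

end

theorem theorem3:
  fixes h :: "real \<times> real \<Rightarrow> real"
  assumes "C2_square_neg_mixed h"
  shows "mane_set (\<lambda>x. h (x 0, x 1)) =
           {x \<in> Xset. \<forall>i j. i \<noteq> j \<longrightarrow> (shift ^^ i) x \<noteq> (shift ^^ j) x}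
           \<union> (\<Union>M. {x \<in> Xset. (shift ^^ M) x \<in> {(\<lambda>_. a) | a. a \<in> min_set h}})"
proof -
  obtain h1 where "twist h h1"
    using twist_if_C2_square_neg_mixed[OF assms] .
  then interpret twist h h1 .
  show ?thesis
  proof (rule set_eqI)
    fix x
    show "x \<in> mane_set (\<lambda>x. h (x 0, x 1)) \<longleftrightarrow> x \<in> {x \<in> Xset. \<forall>i j. i \<noteq> j \<longrightarrow> (shift ^^ i) x \<noteq> (shift ^^ j) x}
           \<union> (\<Union>M. {x \<in> Xset. (shift ^^ M) x \<in> {(\<lambda>_. a) | a. a \<in> min_set h}})"
      unfolding mane_set_phi using zero_action_cycles_iff[of x] by auto
  qed
qed

end
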